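(* For every $\lambda\in\mathbb{R}$, the real $7$-dimensional Lie algebra $\mathfrak{n}_\lambda$ with basis $e_1,\dots,e_7$ whose nonzero brackets (up to antisymmetry) are $[e_1,e_2]=e_4$, $[e_1,e_3]=e_6$, $[e_1,e_4]=e_5$, $[e_1,e_5]=e_7$, $[e_2,e_3]=\lambda e_5$, $[e_2,e_4]=e_6$, $[e_2,e_6]=e_7$, $[e_3,e_4]=(1-\lambda)e_7$ is an Einstein nilradical.
   Context: A real nilpotent Lie algebra $\mathfrak{n}$ is called an Einstein nilradical if it admits an inner product such that the left-invariant Riemannian metric it defines on the simply connected nilpotent Lie group with Lie algebra $\mathfrak{n}$ is a nilsoliton, i.e. its Ricci operator satisfies $\mathrm{Ric}=c\,\mathrm{Id}+D$ for some $c\in\mathbb{R}$ and some derivation $D$ of $\mathfrak{n}$. Brackets of basis elements not listed are zero. *)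

theory Defs
  imports "HOL-Analysis.Analysis"
begin

definition is_lie_bracket :: "('a::real_vector \<Rightarrow> 'a \<Rightarrow> 'a) \<Rightarrow> bool" where
  "is_lie_bracket b \<longleftrightarrow> bilinear b \<and> (\<forall>x. b x x = 0) \<and>
     (\<forall>x y z. b x (b y z) + b y (b z x) + b z (b x y) = 0)"

definition is_nilpotent_bracket :: "('a::real_vector \<Rightarrow> 'a \<Rightarrow> 'a) \<Rightarrow> bool" where
  "is_nilpotent_bracket b \<longleftrightarrow>
     (\<exists>k. \<forall>xs y. length xs = k \<longrightarrow> foldr b xs y = 0)"

definition is_derivation :: "('a::real_vector \<Rightarrow> 'a \<Rightarrow> 'a) \<Rightarrow> ('a \<Rightarrow> 'a) \<Rightarrow> bool" where
  "is_derivation b D \<longleftrightarrow> linear D \<and> (\<forall>x y. D (b x y) = b (D x) y + b x (D y))"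

definition is_inner_prod :: "('a::real_vector \<Rightarrow> 'a \<Rightarrow> real) \<Rightarrow> bool" where
  "is_inner_prod ip \<longleftrightarrow> bilinear ip \<and> (\<forall>x y. ip x y = ip y x) \<and>
     (\<forall>x. x \<noteq> 0 \<longrightarrow> ip x x > 0)"

definition orthonormal_basis :: "('a::real_vector \<Rightarrow> 'a \<Rightarrow> real) \<Rightarrow> ('n::finite \<Rightarrow> 'a) \<Rightarrow> bool" where
  "orthonormal_basis ip B \<longleftrightarrow> (\<forall>i j. ip (B i) (B j) = (if i = j then 1 else 0))
     \<and> span (range B) = UNIV"

text \<open>Ricci form of the left-invariant metric on a nilpotent Lie group, computed with
  an orthonormal basis B of the metric Lie algebra (standard formula for nilpotent
  Lie algebras):
  ric(X,Y) = -1/2 sum_ij <[X,Bi],Bj><[Y,Bi],Bj> + 1/4 sum_ij <[Bi,Bj],X><[Bi,Bj],Y>.\<close>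
definition ricci_form :: "('a::real_vector \<Rightarrow> 'a \<Rightarrow> 'a) \<Rightarrow> ('a \<Rightarrow> 'a \<Rightarrow> real)
    \<Rightarrow> ('n::finite \<Rightarrow> 'a) \<Rightarrow> 'a \<Rightarrow> 'a \<Rightarrow> real" where
  "ricci_form b ip B X Y =
     - (1/2) * (\<Sum>i\<in>UNIV. \<Sum>j\<in>UNIV. ip (b X (B i)) (B j) * ip (b Y (B i)) (B j))
     + (1/4) * (\<Sum>i\<in>UNIV. \<Sum>j\<in>UNIV. ip (b (B i) (B j)) X * ip (b (B i) (B j)) Y)"

definition ricci_op :: "('a::real_vector \<Rightarrow> 'a \<Rightarrow> 'a) \<Rightarrow> ('a \<Rightarrow> 'a \<Rightarrow> real)
    \<Rightarrow> ('n::finite \<Rightarrow> 'a) \<Rightarrow> 'a \<Rightarrow> 'a" where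
  "ricci_op b ip B X = (\<Sum>k\<in>UNIV. ricci_form b ip B X (B k) *\<^sub>R B k)"

definition is_nilsoliton :: "('a::real_vector \<Rightarrow> 'a \<Rightarrow> 'a) \<Rightarrow> ('a \<Rightarrow> 'a \<Rightarrow> real)
    \<Rightarrow> ('n::finite \<Rightarrow> 'a) \<Rightarrow> bool" where
  "is_nilsoliton b ip B \<longleftrightarrow>
     (\<exists>c D. is_derivation b D \<and> (\<forall>X. ricci_op b ip B X = c *\<^sub>R X + D X))"

text \<open>Einstein nilradical: a nilpotent real Lie algebra admitting an inner product
  whose metric is a nilsoliton (Ricci operator computed w.r.t. an orthonormal basis;
  it does not depend on the choice of that basis).\<close>
definition einstein_nilradical :: "(real^'n \<Rightarrow> real^'n \<Rightarrow> real^'n) \<Rightarrow> bool" where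
  "einstein_nilradical b \<longleftrightarrow> is_lie_bracket b \<and> is_nilpotent_bracket b \<and>
     (\<exists>ip. is_inner_prod ip \<and>
        (\<exists>B :: 'n \<Rightarrow> real^'n. orthonormal_basis ip B \<and> is_nilsoliton b ip B))"

definition ee :: "nat \<Rightarrow> real^7" where
  "ee k = axis (of_nat k) 1"

definition coord :: "real^7 \<Rightarrow> nat \<Rightarrow> real" where
  "coord x k = x $ (of_nat k)"

definition nbr_basis :: "real \<Rightarrow> nat \<Rightarrow> nat \<Rightarrow> real^7" where
  "nbr_basis lam i j =
    (if (i,j) = (1,2) then ee 4 else if (i,j) = (2,1) then - ee 4
     else if (i,j) = (1,3) then ee 6 else if (i,j) = (3,1) then - ee 6
     else if (i,j) = (1,4) then ee 5 else if (i,j) = (4,1) then - ee 5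
     else if (i,j) = (1,5) then ee 7 else if (i,j) = (5,1) then - ee 7
     else if (i,j) = (2,3) then lam *\<^sub>R ee 5 else if (i,j) = (3,2) then - (lam *\<^sub>R ee 5)
     else if (i,j) = (2,4) then ee 6 else if (i,j) = (4,2) then - ee 6
     else if (i,j) = (2,6) then ee 7 else if (i,j) = (6,2) then - ee 7
     else if (i,j) = (3,4) then (1 - lam) *\<^sub>R ee 7
     else if (i,j) = (4,3) then - ((1 - lam) *\<^sub>R ee 7)
     else 0)"

definition nbr :: "real \<Rightarrow> real^7 \<Rightarrow> real^7 \<Rightarrow> real^7" where
  "nbr lam x y = (\<Sum>i\<in>{1..7}. \<Sum>j\<in>{1..7}. (coord x i * coord y j) *\<^sub>R nbr_basis lam i j)"

end

theory Submission
  imports Defs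
begin

text \<open>The basis \<open>e\<^sub>1, \<dots>, e\<^sub>7\<close> is nice in Lauret's sense, so for the diagonal metric in
  which the vectors \<open>r\<^sub>i e\<^sub>i\<close> are orthonormal the Ricci operator is diagonal, with entries
  linear in the eight squared structure constants \<open>\<beta>\<^sub>i\<^sub>j = (c\<^sub>i\<^sub>j\<^sup>k r\<^sub>i r\<^sub>j / r\<^sub>k)\<^sup>2\<close>. The grading
  \<open>deg e\<^sub>1 = deg e\<^sub>2 = 1, deg e\<^sub>3 = deg e\<^sub>4 = 2, deg e\<^sub>5 = deg e\<^sub>6 = 3, deg e\<^sub>7 = 4\<close> gives the derivation
  \<open>D = 2 deg\<close>, and \<open>Ric = -11/2 I + D\<close> is a linear system in \<open>\<beta>\<close>; we use its solutions
  with parameters \<open>(a, b)\<close>. Rescaling the weights along the grading leaves every \<open>\<beta>\<close>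
  unchanged, so prescribed values of \<open>\<beta>\<close> are realised by weights iff two multiplicative
  relations hold. Here they read \<open>\<lambda>\<^sup>2 a(a-1) = (5-a-b)(4-a-b)\<close> and \<open>b(b+1) = (1-\<lambda>)\<^sup>2 a(a-1)\<close>,
  and the intermediate value theorem solves them for every \<open>\<lambda>\<close>.\<close>

lemma exhaust_7:
  fixes x :: 7
  shows "x = 1 \<or> x = 2 \<or> x = 3 \<or> x = 4 \<or> x = 5 \<or> x = 6 \<or> x = 7"
proof (induct x)
  case (of_int z)
  then have "z = 0 \<or> z = 1 \<or> z = 2 \<or> z = 3 \<or> z = 4 \<or> z = 5 \<or> z = 6" by fastforce
  then show ?case by auto
qed

lemma forall_7: "(\<forall>i::7. P i) \<longleftrightarrow> P 1 \<and> P 2 \<and> P 3 \<and> P 4 \<and> P 5 \<and> P 6 \<and> P 7"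
  by (metis exhaust_7)

lemma UNIV_7: "UNIV = {1, 2, 3, 4, 5, 6, 7::7}"
  using exhaust_7 by auto

lemma sum_7: "sum f (UNIV::7 set) = f 1 + f 2 + f 3 + f 4 + f 5 + f 6 + f 7"
  unfolding UNIV_7 by (simp add: ac_simps)

lemma nbr_component:
  "nbr lam x y $ k =
    (if k = 4 then x$1*y$2 - x$2*y$1
     else if k = 5 then x$1*y$4 - x$4*y$1 + lam*(x$2*y$3 - x$3*y$2)
     else if k = 6 then x$1*y$3 - x$3*y$1 + x$2*y$4 - x$4*y$2
     else if k = 7 then x$1*y$5 - x$5*y$1 + x$2*y$6 - x$6*y$2 + (1-lam)*(x$3*y$4 - x$4*y$3)
     else 0)"
proof -
  have sum_1_7: "(\<Sum>i\<in>{1..7::nat}. f i) = f 1 + f 2 + f 3 + f 4 + f 5 + f 6 + f 7" for f :: "nat \<Rightarrow> real^7"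
    by (simp add: eval_nat_numeral sum.atLeast_Suc_atMost ac_simps)
  show ?thesis
    using exhaust_7[of k]
    unfolding nbr_def sum_1_7 vector_add_component vector_scaleR_component
    by (simp add: nbr_basis_def ee_def coord_def axis_def) (elim disjE; simp add: algebra_simps)
qed

lemma bilinear_nbr: "bilinear (nbr lam)"
  unfolding bilinear_def
  by (auto intro!: linearI simp: vec_eq_iff forall_7 nbr_component algebra_simps)

lemma is_lie_bracket_nbr: "is_lie_bracket (nbr lam)"
  unfolding is_lie_bracket_def
  by (intro conjI allI bilinear_nbr) (simp_all add: vec_eq_iff forall_7 nbr_component algebra_simps)

lemma is_nilpotent_bracket_nbr: "is_nilpotent_bracket (nbr lam)"
  unfolding is_nilpotent_bracket_def
proof (intro exI allI impI)
  fix xs :: "(real^7) list" and y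
  assume "length xs = 4"
  then obtain a b c d where "xs = [a, b, c, d]"
    by (cases xs; cases "tl xs"; cases "tl (tl xs)"; cases "tl (tl (tl xs))"; auto)
  then show "foldr (nbr lam) xs y = 0"
    by (simp add: vec_eq_iff forall_7 nbr_component)
qed

definition nbr_degree :: "7 \<Rightarrow> real" where
  "nbr_degree i = (if i = 1 \<or> i = 2 then 1 else if i = 3 \<or> i = 4 then 2
     else if i = 5 \<or> i = 6 then 3 else 4)"

definition diag_map :: "('n::finite \<Rightarrow> real) \<Rightarrow> real^'n \<Rightarrow> real^'n" where
  "diag_map d x = (\<chi> i. d i * x$i)"

lemma diag_map_component [simp]: "diag_map d x $ i = d i * x $ i"
  by (simp add: diag_map_def)

lemma is_derivation_nbr_grading: "is_derivation (nbr lam) (diag_map (\<lambda>i. 2 * nbr_degree i))"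
  unfolding is_derivation_def
  by (intro conjI allI linearI)
    (simp_all add: vec_eq_iff forall_7 nbr_degree_def algebra_simps nbr_component)

definition diag_inner :: "('n::finite \<Rightarrow> real) \<Rightarrow> real^'n \<Rightarrow> real^'n \<Rightarrow> real" where
  "diag_inner r x y = (\<Sum>k\<in>UNIV. x$k * y$k / (r k)^2)"

definition diag_basis :: "('n::finite \<Rightarrow> real) \<Rightarrow> 'n \<Rightarrow> real^'n" where
  "diag_basis r i = r i *\<^sub>R axis i 1"

lemma diag_basis_component: "diag_basis r i $ k = (if k = i then r i else 0)"
  by (simp add: diag_basis_def axis_def)

lemma diag_inner_basis_right: "diag_inner r u (diag_basis r j) = u$j / r j"
proof -
  have "diag_inner r u (diag_basis r j) = (\<Sum>k\<in>UNIV. if k = j then u$j * r j / (r j)^2 else 0)"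
    unfolding diag_inner_def diag_basis_def by (rule sum.cong) (auto simp: axis_def)
  then show ?thesis by (simp add: power2_eq_square)
qed

lemma diag_inner_commute: "diag_inner r x y = diag_inner r y x"
  by (simp add: diag_inner_def mult.commute)

lemma diag_inner_basis_left: "diag_inner r (diag_basis r j) u = u$j / r j"
  by (simp add: diag_inner_commute diag_inner_basis_right)

lemma is_inner_prod_diag_inner:
  fixes r :: "'n::finite \<Rightarrow> real"
  assumes "\<And>i. r i \<noteq> 0"
  shows "is_inner_prod (diag_inner r)"
  unfolding is_inner_prod_def
proof (intro conjI allI impI diag_inner_commute)
  show "bilinear (diag_inner r)"
    unfolding bilinear_def
    by (auto intro!: linearI simp: diag_inner_def sum.distrib sum_distrib_left algebra_simps
        add_divide_distrib)
  fix x :: "real^'n" assume "x \<noteq> 0"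
  then obtain k where k: "x$k \<noteq> 0" by (auto simp: vec_eq_iff)
  show "diag_inner r x x > 0" unfolding diag_inner_def
  proof (rule sum_pos2[of _ k])
    show "0 < x$k * x$k / (r k)^2"
      using k assms[of k] by (intro divide_pos_pos) (auto simp: zero_less_mult_iff linorder_neq_iff)
  qed auto
qed

lemma orthonormal_basis_diag_basis:
  fixes r :: "'n::finite \<Rightarrow> real"
  assumes "\<And>i. r i \<noteq> 0"
  shows "orthonormal_basis (diag_inner r) (diag_basis r)"
  unfolding orthonormal_basis_def
proof (intro conjI allI)
  show "diag_inner r (diag_basis r i) (diag_basis r j) = (if i = j then 1 else 0)" for i j
    using assms by (simp add: diag_inner_basis_right diag_basis_component)
  have "Basis \<subseteq> span (range (diag_basis r))"
  proof
    fix v :: "real^'n" assume "v \<in> Basis"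
    then obtain i where v: "v = axis i 1" by (auto simp: Basis_vec_def)
    have "v = (1 / r i) *\<^sub>R diag_basis r i" using assms[of i] by (simp add: v diag_basis_def)
    then show "v \<in> span (range (diag_basis r))" by (simp add: span_base span_scale)
  qed
  then show "span (range (diag_basis r)) = UNIV"
    using span_minimal[OF _ subspace_span] span_Basis by blast
qed

definition beta12 :: "(7 \<Rightarrow> real) \<Rightarrow> real" where "beta12 r = (r 1 * r 2 / r 4)^2"
definition beta13 :: "(7 \<Rightarrow> real) \<Rightarrow> real" where "beta13 r = (r 1 * r 3 / r 6)^2"
definition beta14 :: "(7 \<Rightarrow> real) \<Rightarrow> real" where "beta14 r = (r 1 * r 4 / r 5)^2"
definition beta15 :: "(7 \<Rightarrow> real) \<Rightarrow> real" where "beta15 r = (r 1 * r 5 / r 7)^2"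
definition beta23 :: "real \<Rightarrow> (7 \<Rightarrow> real) \<Rightarrow> real" where "beta23 lam r = lam^2 * (r 2 * r 3 / r 5)^2"
definition beta24 :: "(7 \<Rightarrow> real) \<Rightarrow> real" where "beta24 r = (r 2 * r 4 / r 6)^2"
definition beta26 :: "(7 \<Rightarrow> real) \<Rightarrow> real" where "beta26 r = (r 2 * r 6 / r 7)^2"
definition beta34 :: "real \<Rightarrow> (7 \<Rightarrow> real) \<Rightarrow> real" where
  "beta34 lam r = (1-lam)^2 * (r 3 * r 4 / r 7)^2"

lemmas beta_defs = beta12_def beta13_def beta14_def beta15_def beta23_def beta24_def beta26_def
  beta34_def

lemmas diag_inner_basis_simps = diag_inner_basis_left diag_inner_basis_right diag_basis_component

lemma ricci_op_nbr_diag_1: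
  assumes "\<And>i. r i \<noteq> 0"
  shows "ricci_op (nbr lam) (diag_inner r) (diag_basis r) X $ 1
      = - (beta12 r + beta13 r + beta14 r + beta15 r) / 2 * X$1"
  using assms unfolding ricci_op_def ricci_form_def sum_7
  by (simp add: diag_inner_basis_simps nbr_component)
    (simp add: diag_inner_def sum_7 diag_basis_component nbr_component beta_defs
      power2_eq_square field_simps)

lemma ricci_op_nbr_diag_2:
  assumes "\<And>i. r i \<noteq> 0"
  shows "ricci_op (nbr lam) (diag_inner r) (diag_basis r) X $ 2
      = - (beta12 r + beta23 lam r + beta24 r + beta26 r) / 2 * X$2"
  using assms unfolding ricci_op_def ricci_form_def sum_7
  by (simp add: diag_inner_basis_simps nbr_component)
    (simp add: diag_inner_def sum_7 diag_basis_component nbr_component beta_defs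
      power2_eq_square field_simps)

lemma ricci_op_nbr_diag_3:
  assumes "\<And>i. r i \<noteq> 0"
  shows "ricci_op (nbr lam) (diag_inner r) (diag_basis r) X $ 3
      = - (beta13 r + beta23 lam r + beta34 lam r) / 2 * X$3"
  using assms unfolding ricci_op_def ricci_form_def sum_7
  by (simp add: diag_inner_basis_simps nbr_component)
    (simp add: diag_inner_def sum_7 diag_basis_component nbr_component beta_defs
      power2_eq_square field_simps)

lemma ricci_op_nbr_diag_4:
  assumes "\<And>i. r i \<noteq> 0"
  shows "ricci_op (nbr lam) (diag_inner r) (diag_basis r) X $ 4
      = (beta12 r - beta14 r - beta24 r - beta34 lam r) / 2 * X$4"
  using assms unfolding ricci_op_def ricci_form_def sum_7
  by (simp add: diag_inner_basis_simps nbr_component)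
    (simp add: diag_inner_def sum_7 diag_basis_component nbr_component beta_defs
      power2_eq_square field_simps)

lemma ricci_op_nbr_diag_5:
  assumes "\<And>i. r i \<noteq> 0"
  shows "ricci_op (nbr lam) (diag_inner r) (diag_basis r) X $ 5
      = (beta14 r + beta23 lam r - beta15 r) / 2 * X$5"
  using assms unfolding ricci_op_def ricci_form_def sum_7
  by (simp add: diag_inner_basis_simps nbr_component)
    (simp add: diag_inner_def sum_7 diag_basis_component nbr_component beta_defs
      power2_eq_square field_simps)

lemma ricci_op_nbr_diag_6:
  assumes "\<And>i. r i \<noteq> 0"
  shows "ricci_op (nbr lam) (diag_inner r) (diag_basis r) X $ 6
      = (beta13 r + beta24 r - beta26 r) / 2 * X$6"
  using assms unfolding ricci_op_def ricci_form_def sum_7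
  by (simp add: diag_inner_basis_simps nbr_component)
    (simp add: diag_inner_def sum_7 diag_basis_component nbr_component beta_defs
      power2_eq_square field_simps)

lemma ricci_op_nbr_diag_7:
  assumes "\<And>i. r i \<noteq> 0"
  shows "ricci_op (nbr lam) (diag_inner r) (diag_basis r) X $ 7
      = (beta15 r + beta26 r + beta34 lam r) / 2 * X$7"
  using assms unfolding ricci_op_def ricci_form_def sum_7
  by (simp add: diag_inner_basis_simps nbr_component)
    (simp add: diag_inner_def sum_7 diag_basis_component nbr_component beta_defs
      power2_eq_square field_simps)

lemmas ricci_op_nbr_diag = ricci_op_nbr_diag_1 ricci_op_nbr_diag_2 ricci_op_nbr_diag_3
  ricci_op_nbr_diag_4 ricci_op_nbr_diag_5 ricci_op_nbr_diag_6 ricci_op_nbr_diag_7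

lemma is_nilsoliton_nbr_diag:
  assumes "\<And>i. r i \<noteq> 0"
    and "beta12 r = b + 1" "beta13 r = a - 1" "beta14 r = 2" "beta15 r = 5 - a - b"
    and "beta23 lam r = 4 - a - b" "beta24 r = 2" "beta26 r = a" "beta34 lam r = b"
  shows "is_nilsoliton (nbr lam) (diag_inner r) (diag_basis r)"
  unfolding is_nilsoliton_def
proof (intro exI conjI allI)
  show "is_derivation (nbr lam) (diag_map (\<lambda>i. 2 * nbr_degree i))"
    by (rule is_derivation_nbr_grading)
  show "ricci_op (nbr lam) (diag_inner r) (diag_basis r) X
      = (- 11/2) *\<^sub>R X + diag_map (\<lambda>i. 2 * nbr_degree i) X" for X
    unfolding vec_eq_iff forall_7
    by (simp add: ricci_op_nbr_diag[OF assms(1)] assms(2-) nbr_degree_def field_simps)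
qed

definition pos_root :: "real \<Rightarrow> real" where
  "pos_root q = (1 + sqrt (1 + 4 * q)) / 2"

lemma pos_root_eq:
  assumes "q \<ge> 0"
  shows "pos_root q * (pos_root q - 1) = q"
proof -
  have "(sqrt (1 + 4 * q))^2 = 1 + 4 * q" using assms by simp
  then show ?thesis by (simp add: pos_root_def field_simps power2_eq_square)
qed

lemma pos_root_ge_1: "q \<ge> 0 \<Longrightarrow> pos_root q \<ge> 1"
  by (simp add: pos_root_def)

lemma pos_root_gt_1: "q > 0 \<Longrightarrow> pos_root q > 1"
  by (simp add: pos_root_def)

lemma continuous_on_pos_root [continuous_intros]:
  "continuous_on S f \<Longrightarrow> continuous_on S (\<lambda>x. pos_root (f x))"
  unfolding pos_root_def by (intro continuous_intros) auto

lemma nilsoliton_parameters_exist: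
  fixes lam :: real
  obtains a b where "a > 1" "b \<ge> 0" "a + b \<le> 4"
    "lam^2 * (a * (a - 1)) = (5 - a - b) * (4 - a - b)"
    "b * (b + 1) = (1 - lam)^2 * (a * (a - 1))"
proof (cases "lam = 0")
  case True
  then show ?thesis by (intro that[of "5/2" "3/2"]) (simp_all add: power2_eq_square)
next
  case False
  then have lam2: "lam^2 > 0" by simp
  define Q where "Q s = (5 - s) * (4 - s) / lam^2" for s :: real
  define A where "A s = pos_root (Q s)" for s
  define B where "B s = pos_root ((1 - lam)^2 * Q s) - 1" for s
  \<comment> \<open>\<open>a = A s\<close>, \<open>b = B s\<close> solve both equations once \<open>a + b = s\<close>, so we look for a zero of \<open>G\<close>.\<close>
  define G where "G s = A s + B s - s" for s
  have "continuous_on {1..4} G"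
    unfolding G_def A_def B_def Q_def using lam2 by (intro continuous_intros) auto
  moreover have "G 1 \<ge> 0"
    using lam2 pos_root_ge_1[of "Q 1"] pos_root_ge_1[of "(1 - lam)^2 * Q 1"]
    by (simp add: G_def A_def B_def Q_def)
  moreover have G4: "G 4 < 0"
    by (simp add: G_def A_def B_def Q_def pos_root_def)
  ultimately obtain s where s: "1 \<le> s" "s \<le> 4" "G s = 0"
    using IVT2'[of G 4 0 1] by force
  have "s < 4" using s G4 by (cases "s = 4") auto
  then have Q: "Q s > 0" using lam2 by (simp add: Q_def)
  have eqA: "A s * (A s - 1) = Q s" and eqB: "B s * (B s + 1) = (1 - lam)^2 * Q s"
    using pos_root_eq[of "Q s"] pos_root_eq[of "(1 - lam)^2 * Q s"] Q
    by (simp_all add: A_def B_def mult.commute)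
  show ?thesis
  proof (rule that[of "A s" "B s"])
    show "A s > 1" using pos_root_gt_1[OF Q] by (simp add: A_def)
    show "B s \<ge> 0" using pos_root_ge_1[of "(1 - lam)^2 * Q s"] Q by (simp add: B_def)
    have sum: "A s + B s = s" using s(3) by (simp add: G_def)
    then show "A s + B s \<le> 4" using s by simp
    show "lam^2 * (A s * (A s - 1)) = (5 - A s - B s) * (4 - A s - B s)"
      using lam2 sum by (simp add: eqA Q_def diff_diff_eq)
    show "B s * (B s + 1) = (1 - lam)^2 * (A s * (A s - 1))"
      by (simp add: eqA eqB)
  qed
qed

lemma beta_sqrt_weights:
  assumes w: "\<And>i. w i > 0"
  defines "r \<equiv> \<lambda>i. sqrt (w i)"
  shows "beta12 r = w 1 * w 2 / w 4" "beta13 r = w 1 * w 3 / w 6" "beta14 r = w 1 * w 4 / w 5"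
    "beta15 r = w 1 * w 5 / w 7" "beta23 lam r = lam^2 * (w 2 * w 3 / w 5)"
    "beta24 r = w 2 * w 4 / w 6" "beta26 r = w 2 * w 6 / w 7"
    "beta34 lam r = (1-lam)^2 * (w 3 * w 4 / w 7)"
  using w by (simp_all add: r_def beta_defs power_divide power_mult_distrib less_imp_le)

lemma nilsoliton_weights_exist:
  fixes a b lam :: real
  assumes a: "a > 1" and b: "b \<ge> 0" and ab: "a + b \<le> 4"
    and eq1: "lam^2 * (a * (a - 1)) = (5 - a - b) * (4 - a - b)"
    and eq2: "b * (b + 1) = (1 - lam)^2 * (a * (a - 1))"
  obtains r where "\<And>i. r i \<noteq> 0"
    "beta12 r = b + 1" "beta13 r = a - 1" "beta14 r = 2" "beta15 r = 5 - a - b"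
    "beta23 lam r = 4 - a - b" "beta24 r = 2" "beta26 r = a" "beta34 lam r = b"
proof -
  define c where "c = 5 - a - b"
  have c: "c > 0" using ab by (simp add: c_def)
  define k where "k = sqrt (a / ((b + 1)^2 * c))"
  have k: "k > 0" using a b c by (simp add: k_def)
  have kk: "(b + 1)^2 * c * k^2 = a" using a b c by (simp add: k_def)
  \<comment> \<open>Starting from \<open>w 1 = 1\<close> and \<open>w 4 = k\<close>, the equations for \<open>\<beta>\<^sub>1\<^sub>2, \<beta>\<^sub>1\<^sub>4, \<beta>\<^sub>1\<^sub>5, \<beta>\<^sub>2\<^sub>4, \<beta>\<^sub>1\<^sub>3\<close>
    determine the other weights; \<open>\<beta>\<^sub>2\<^sub>6 = a\<close> then fixes \<open>k\<close>, and the equations for \<open>\<beta>\<^sub>2\<^sub>3, \<beta>\<^sub>3\<^sub>4\<close>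
    reduce to \<open>eq1\<close>, \<open>eq2\<close>.\<close>
  define w where "w i = (if i = 1 then 1 else if i = 2 then (b + 1) * k
     else if i = 3 then (a - 1) * (b + 1) * k^2 / 2 else if i = 4 then k else if i = 5 then k / 2
     else if i = 6 then (b + 1) * k^2 / 2 else k / (2 * c))" for i :: 7
  have w: "w i > 0" for i
    using exhaust_7[of i] k a b c by (auto simp: w_def)
  have b1: "b + 1 \<noteq> 0" using b by simp
  show ?thesis
  proof (rule that[of "\<lambda>i. sqrt (w i)"], unfold beta_sqrt_weights[OF w])
    show "sqrt (w i) \<noteq> 0" for i using w[of i] by simp
    show "w 1 * w 2 / w 4 = b + 1" "w 1 * w 3 / w 6 = a - 1" "w 1 * w 4 / w 5 = 2"
      "w 2 * w 4 / w 6 = 2"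
      using k b1 by (simp_all add: w_def power2_eq_square)
    show "w 1 * w 5 / w 7 = 5 - a - b" using k c by (simp add: w_def c_def)
    have w267: "w 2 * w 6 / w 7 = (b + 1)^2 * c * k^2"
      using k c by (simp add: w_def field_simps power2_eq_square)
    show "w 2 * w 6 / w 7 = a" unfolding w267 kk ..
    have w235: "w 2 * w 3 / w 5 = (a - 1) * ((b + 1)^2 * c * k^2) / c"
      using k c by (simp add: w_def field_simps power2_eq_square)
    show "lam^2 * (w 2 * w 3 / w 5) = 4 - a - b"
      unfolding w235 kk using eq1 c by (simp add: c_def field_simps)
    have w347: "w 3 * w 4 / w 7 = (a - 1) * ((b + 1)^2 * c * k^2) / (b + 1)"
      using k c b1 by (simp add: w_def field_simps power2_eq_square)
    show "(1-lam)^2 * (w 3 * w 4 / w 7) = b"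
      unfolding w347 kk using eq2 b1 by (simp add: field_simps)
  qed
qed

theorem mainTheorem20:
  fixes lam :: real
  shows "einstein_nilradical (nbr lam)"
proof -
  obtain a b where ab: "a > 1" "b \<ge> 0" "a + b \<le> 4"
    "lam^2 * (a * (a - 1)) = (5 - a - b) * (4 - a - b)"
    "b * (b + 1) = (1 - lam)^2 * (a * (a - 1))"
    by (rule nilsoliton_parameters_exist)
  obtain r where r: "\<And>i. r i \<noteq> 0"
    and betas: "beta12 r = b + 1" "beta13 r = a - 1" "beta14 r = 2" "beta15 r = 5 - a - b"
    "beta23 lam r = 4 - a - b" "beta24 r = 2" "beta26 r = a" "beta34 lam r = b"
    using nilsoliton_weights_exist[OF ab] by blast
  have "is_nilsoliton (nbr lam) (diag_inner r) (diag_basis r)"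
    by (rule is_nilsoliton_nbr_diag[OF r betas])
  then show ?thesis
    unfolding einstein_nilradical_def
    using is_lie_bracket_nbr is_nilpotent_bracket_nbr is_inner_prod_diag_inner[OF r]
      orthonormal_basis_diag_basis[OF r]
    by (intro conjI exI[of _ "diag_inner r"] exI[of _ "diag_basis r"]) simp_all
qed

end
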